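(* Let $N\ge 2$ and let $(\nu_r^{(1:N)})_{r\ge1}$ be vectors of non-negative integers with $\sum_i \nu_r^{(i)} = N$, with $c_N$, $D_N$, $\tau_N$ as defined below, and assume $\tau_N(u)<\infty$ for all $u\ge0$. Fix $t > 0$ and $l \in \mathbb{N}$. Then for any constant $B > 0$, $$\sum_{\substack{s_1,\dots,s_l=1\\\text{all distinct}}}^{\tau_N(t)}\prod_{j=1}^l\big[c_N(s_j) - BD_N(s_j)\big] \geq \sum_{\substack{s_1,\dots,s_l=1\\\text{all distinct}}}^{\tau_N(t)}\prod_{j=1}^l c_N(s_j) - \Bigg(\sum_{s=1}^{\tau_N(t)} D_N(s)\Bigg)(t+1)^{l-1}(1+B)^l.$$
   Context: $(x)_k$ is the falling factorial. $c_N(r) := \frac{1}{(N)_2}\sum_{i=1}^N(\nu_r^{(i)})_2$; $D_N(r) := \frac{1}{N(N)_2}\sum_{i=1}^N(\nu_r^{(i)})_2\{\nu_r^{(i)} + \frac1N\sum_{j\ne i}(\nu_r^{(j)})^2\}$; $\tau_N(u) := \inf\{s\in\{0,1,2,\dots\} : \sum_{r=1}^s c_N(r) \ge u\}$. *)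

theory Defs
  imports Complex_Main "HOL-Library.FuncSet"
begin

definition ff2 :: "real \<Rightarrow> real" where
  "ff2 x = x * (x - 1)"

text \<open>nu r i is the i-th entry (i = 1..N) of the r-th offspring vector (r \<ge> 1).\<close>
definition cN :: "nat \<Rightarrow> (nat \<Rightarrow> nat \<Rightarrow> nat) \<Rightarrow> nat \<Rightarrow> real" where
  "cN N nu r = (\<Sum>i=1..N. ff2 (real (nu r i))) / ff2 (real N)"

definition DN :: "nat \<Rightarrow> (nat \<Rightarrow> nat \<Rightarrow> nat) \<Rightarrow> nat \<Rightarrow> real" where
  "DN N nu r = (\<Sum>i=1..N. ff2 (real (nu r i)) *
       (real (nu r i) + (1 / real N) * (\<Sum>j\<in>{1..N} - {i}. (real (nu r j))^2)))
     / (real N * ff2 (real N))"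

definition tauN :: "nat \<Rightarrow> (nat \<Rightarrow> nat \<Rightarrow> nat) \<Rightarrow> real \<Rightarrow> nat" where
  "tauN N nu u = (LEAST s. (\<Sum>r=1..s. cN N nu r) \<ge> u)"

definition distinct_tuples :: "nat \<Rightarrow> nat \<Rightarrow> (nat \<Rightarrow> nat) set" where
  "distinct_tuples l m = {s. s \<in> {0..<l} \<rightarrow>\<^sub>E {1..m} \<and> inj_on s {0..<l}}"

end

theory Submission
  imports Defs
begin

(* For each tuple, telescoping the product gives
     prod c - prod (c - B d) <= sum_k B (1+B)^k d_k prod_{j ~= k} c_j,
   since 0 <= D_N <= c_N makes every factor |c - B d| at most (1+B) c.
   Summed over distinct tuples, the k-th term is bounded by enlarging to all l-tuples,
   where the sum of products factors as (sum D_N) (sum c_N)^(l-1); finally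
   sum_{s <= tau_N(t)} c_N(s) <= t + 1, because c_N <= 1 and every partial sum
   before tau_N(t) is still below t. *)

lemma abs_prod_perturbed_le:
  fixes c d :: "nat \<Rightarrow> real"
  assumes "\<And>j. j < l \<Longrightarrow> 0 \<le> d j \<and> d j \<le> c j" and "B \<ge> 0"
  shows "\<bar>\<Prod>j<l. c j - B * d j\<bar> \<le> (1 + B) ^ l * (\<Prod>j<l. c j)"
proof -
  have "\<bar>\<Prod>j<l. c j - B * d j\<bar> = (\<Prod>j<l. \<bar>c j - B * d j\<bar>)"
    by (simp add: abs_prod)
  also have "\<dots> \<le> (\<Prod>j<l. (1 + B) * c j)"
  proof (rule prod_mono)
    fix j assume "j \<in> {..<l}"
    with assms(1) have "0 \<le> d j" "d j \<le> c j" by auto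
    with assms(2) have "0 \<le> B * d j" "B * d j \<le> B * c j" "0 \<le> c j"
      by (auto intro: mult_left_mono)
    then show "0 \<le> \<bar>c j - B * d j\<bar> \<and> \<bar>c j - B * d j\<bar> \<le> (1 + B) * c j"
      by (simp add: abs_le_iff distrib_right)
  qed
  also have "\<dots> = (1 + B) ^ l * (\<Prod>j<l. c j)"
    by (simp add: prod.distrib)
  finally show ?thesis .
qed

lemma prod_minus_prod_perturbed_le:
  fixes c d :: "nat \<Rightarrow> real"
  assumes "\<And>j. j < l \<Longrightarrow> 0 \<le> d j \<and> d j \<le> c j" and B: "B \<ge> 0"
  shows "(\<Prod>j<l. c j) - (\<Prod>j<l. c j - B * d j)
     \<le> (\<Sum>k<l. B * (1 + B) ^ k * d k * (\<Prod>j\<in>{..<l} - {k}. c j))"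
  using assms(1)
proof (induction l)
  case 0
  then show ?case by simp
next
  case (Suc l)
  define P where "P = (\<Prod>j<l. c j)"
  define Q where "Q = (\<Prod>j<l. c j - B * d j)"
  have dc: "\<And>j. j < l \<Longrightarrow> 0 \<le> d j \<and> d j \<le> c j" and dc_l: "0 \<le> d l" "d l \<le> c l"
    using Suc.prems by auto
  have split: "(\<Prod>j<Suc l. c j) - (\<Prod>j<Suc l. c j - B * d j) = (P - Q) * c l + Q * (B * d l)"
    by (simp add: P_def Q_def algebra_simps)
  have remove_k: "(\<Prod>j\<in>{..<Suc l} - {k}. c j) = (\<Prod>j\<in>{..<l} - {k}. c j) * c l" if "k < l" for k
  proof -
    from that have "{..<Suc l} - {k} = insert l ({..<l} - {k})" by auto
    then show ?thesis by (simp add: mult.commute)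
  qed
  have "(P - Q) * c l \<le> (\<Sum>k<l. B * (1 + B) ^ k * d k * (\<Prod>j\<in>{..<l} - {k}. c j)) * c l"
    using Suc.IH[OF dc] dc_l by (intro mult_right_mono) (auto simp: P_def Q_def)
  also have "\<dots> = (\<Sum>k<l. B * (1 + B) ^ k * d k * (\<Prod>j\<in>{..<Suc l} - {k}. c j))"
    by (simp add: remove_k sum_distrib_right mult.assoc)
  finally have old_terms: "(P - Q) * c l \<le> \<dots>" .
  have "Q * (B * d l) \<le> \<bar>Q\<bar> * (B * d l)"
    using dc_l B by (intro mult_right_mono) auto
  also have "\<dots> \<le> (1 + B) ^ l * P * (B * d l)"
    using dc_l B abs_prod_perturbed_le[OF dc B] by (intro mult_right_mono) (auto simp: P_def Q_def)
  also have "\<dots> = B * (1 + B) ^ l * d l * (\<Prod>j\<in>{..<Suc l} - {l}. c j)"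
    by (simp add: P_def lessThan_Suc)
  finally have new_term: "Q * (B * d l) \<le> \<dots>" .
  show ?case
    using old_terms new_term split by simp
qed

lemma sum_subset_PiE_prod_le:
  fixes c d :: "nat \<Rightarrow> real"
  assumes R: "finite R" and T: "T \<subseteq> PiE {..<l} (\<lambda>_. R)"
    and c: "\<And>r. 0 \<le> c r" and d: "\<And>r. 0 \<le> d r" and k: "k < l"
  shows "(\<Sum>s\<in>T. d (s k) * (\<Prod>j\<in>{..<l} - {k}. c (s j))) \<le> sum d R * sum c R ^ (l - 1)"
proof -
  define f where "f j = (if j = k then d else c)" for j
  have f_prod: "(\<Prod>j<l. f j (s j)) = d (s k) * (\<Prod>j\<in>{..<l} - {k}. c (s j))" for s
  proof -
    have "(\<Prod>j\<in>{..<l} - {k}. f j (s j)) = (\<Prod>j\<in>{..<l} - {k}. c (s j))"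
      by (rule prod.cong) (auto simp: f_def)
    with k show ?thesis by (simp add: prod.remove f_def)
  qed
  have "(\<Sum>s\<in>T. d (s k) * (\<Prod>j\<in>{..<l} - {k}. c (s j))) = (\<Sum>s\<in>T. \<Prod>j<l. f j (s j))"
    by (simp add: f_prod)
  also have "\<dots> \<le> (\<Sum>s\<in>PiE {..<l} (\<lambda>_. R). \<Prod>j<l. f j (s j))"
    using R T c d by (intro sum_mono2 prod_nonneg) (auto simp: finite_PiE f_def)
  also have "\<dots> = (\<Prod>j<l. \<Sum>r\<in>R. f j r)"
    using R by (simp add: prod_sum_PiE)
  also have "\<dots> = sum d R * (\<Prod>j\<in>{..<l} - {k}. sum c R)"
    using k by (simp add: prod.remove f_def)
  also have "\<dots> = sum d R * sum c R ^ (l - 1)"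
    using k by simp
  finally show ?thesis .
qed

lemma sum_prod_perturbed_ge:
  fixes c d :: "nat \<Rightarrow> real"
  assumes R: "finite R" and T: "T \<subseteq> PiE {..<l} (\<lambda>_. R)"
    and c: "\<And>r. 0 \<le> c r" and d: "\<And>r. 0 \<le> d r" and dc: "\<And>r. r \<in> R \<Longrightarrow> d r \<le> c r"
    and B: "B \<ge> 0" and sum_c: "sum c R \<le> K"
  shows "(\<Sum>s\<in>T. \<Prod>j<l. c (s j) - B * d (s j))
     \<ge> (\<Sum>s\<in>T. \<Prod>j<l. c (s j)) - sum d R * K ^ (l - 1) * (1 + B) ^ l"
proof -
  have sum_d: "0 \<le> sum d R" and "0 \<le> sum c R"
    using c d by (simp_all add: sum_nonneg)
  have "(\<Sum>s\<in>T. \<Prod>j<l. c (s j)) - (\<Sum>s\<in>T. \<Prod>j<l. c (s j) - B * d (s j))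
     = (\<Sum>s\<in>T. (\<Prod>j<l. c (s j)) - (\<Prod>j<l. c (s j) - B * d (s j)))"
    by (simp add: sum_subtractf)
  also have "\<dots> \<le> (\<Sum>s\<in>T. \<Sum>k<l. B * (1 + B) ^ k * d (s k) * (\<Prod>j\<in>{..<l} - {k}. c (s j)))"
  proof (rule sum_mono)
    fix s assume "s \<in> T"
    with T have "\<And>j. j < l \<Longrightarrow> s j \<in> R" by (auto simp: PiE_def Pi_def)
    with d dc show "(\<Prod>j<l. c (s j)) - (\<Prod>j<l. c (s j) - B * d (s j))
      \<le> (\<Sum>k<l. B * (1 + B) ^ k * d (s k) * (\<Prod>j\<in>{..<l} - {k}. c (s j)))"
      by (intro prod_minus_prod_perturbed_le B) auto
  qed
  also have "\<dots> = (\<Sum>k<l. B * (1 + B) ^ k * (\<Sum>s\<in>T. d (s k) * (\<Prod>j\<in>{..<l} - {k}. c (s j))))"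
    by (subst sum.swap) (simp add: sum_distrib_left mult.assoc)
  also have "\<dots> \<le> (\<Sum>k<l. B * (1 + B) ^ k * (sum d R * K ^ (l - 1)))"
  proof (rule sum_mono)
    fix k assume "k \<in> {..<l}"
    then have "(\<Sum>s\<in>T. d (s k) * (\<Prod>j\<in>{..<l} - {k}. c (s j))) \<le> sum d R * sum c R ^ (l - 1)"
      by (intro sum_subset_PiE_prod_le[OF R T c d]) auto
    also have "\<dots> \<le> sum d R * K ^ (l - 1)"
      using sum_d \<open>0 \<le> sum c R\<close> sum_c by (intro mult_left_mono power_mono) auto
    finally show "B * (1 + B) ^ k * (\<Sum>s\<in>T. d (s k) * (\<Prod>j\<in>{..<l} - {k}. c (s j)))
        \<le> B * (1 + B) ^ k * (sum d R * K ^ (l - 1))"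
      using B by (intro mult_left_mono) auto
  qed
  also have "\<dots> = ((1 + B) ^ l - 1) * (sum d R * K ^ (l - 1))"
  proof -
    have "(\<Sum>k<l. B * (1 + B) ^ k) = (1 + B) ^ l - 1"
      by (induction l) (auto simp: algebra_simps)
    then show ?thesis by (simp add: sum_distrib_right[symmetric])
  qed
  also have "\<dots> \<le> (1 + B) ^ l * (sum d R * K ^ (l - 1))"
    using sum_d \<open>0 \<le> sum c R\<close> sum_c by (intro mult_right_mono) auto
  finally show ?thesis by (simp add: mult_ac)
qed

lemma ff2_of_nat_nonneg: "0 \<le> ff2 (real n)"
  by (cases n) (auto simp: ff2_def)

lemma sum_power2_le_power2_sum:
  fixes f :: "'b \<Rightarrow> 'a::linordered_idom"
  assumes "\<And>x. x \<in> A \<Longrightarrow> 0 \<le> f x"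
  shows "(\<Sum>x\<in>A. f x ^ 2) \<le> (\<Sum>x\<in>A. f x) ^ 2"
  using assms
proof (induction A rule: infinite_finite_induct)
  case (insert x A)
  then have "0 \<le> f x * sum f A"
    by (simp add: sum_nonneg)
  with insert show ?case
    by (simp add: power2_sum)
qed simp_all

lemma cN_nonneg: "0 \<le> cN N nu r"
  unfolding cN_def by (intro divide_nonneg_nonneg sum_nonneg ff2_of_nat_nonneg)

lemma DN_nonneg: "0 \<le> DN N nu r"
  unfolding DN_def
  by (intro divide_nonneg_nonneg sum_nonneg mult_nonneg_nonneg add_nonneg_nonneg ff2_of_nat_nonneg) auto

lemma cN_le_1:
  assumes "(\<Sum>i=1..N. nu r i) = N"
  shows "cN N nu r \<le> 1"
proof -
  define x where "x i = real (nu r i)" for i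
  have sum_x: "(\<Sum>i=1..N. x i) = real N"
    using assms unfolding x_def by (metis of_nat_sum)
  have "(\<Sum>i=1..N. ff2 (x i)) = (\<Sum>i=1..N. x i ^ 2) - (\<Sum>i=1..N. x i)"
    by (simp add: ff2_def sum_subtractf power2_eq_square algebra_simps)
  also have "\<dots> \<le> (\<Sum>i=1..N. x i) ^ 2 - (\<Sum>i=1..N. x i)"
    using sum_power2_le_power2_sum[of "{1..N}" x] by (simp add: x_def)
  also have "\<dots> = ff2 (real N)"
    unfolding sum_x by (simp add: ff2_def power2_eq_square algebra_simps)
  finally show ?thesis
    using ff2_of_nat_nonneg[of N] unfolding cN_def x_def
    by (auto simp: divide_le_eq_1)
qed

lemma DN_le_cN:
  assumes "(\<Sum>i=1..N. nu r i) = N"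
  shows "DN N nu r \<le> cN N nu r"
proof (cases "N = 0")
  case False
  define x where "x i = real (nu r i)" for i
  have others_le: "x i + (1 / real N) * (\<Sum>j\<in>{1..N} - {i}. x j ^ 2) \<le> real N"
    if i: "i \<in> {1..N}" for i
  proof -
    have "(\<Sum>j\<in>{1..N} - {i}. x j) + x i = real N"
      using assms i unfolding x_def by (metis finite_atLeastAtMost of_nat_add of_nat_sum sum.remove add.commute)
    moreover have "0 \<le> (\<Sum>j\<in>{1..N} - {i}. x j)"
      by (simp add: x_def sum_nonneg)
    ultimately have others: "(\<Sum>j\<in>{1..N} - {i}. x j) = real N - x i" and "0 \<le> real N - x i"
      by linarith+
    have "(\<Sum>j\<in>{1..N} - {i}. x j ^ 2) \<le> (\<Sum>j\<in>{1..N} - {i}. x j) ^ 2"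
      by (rule sum_power2_le_power2_sum) (simp add: x_def)
    also have "\<dots> = (real N - x i) ^ 2"
      by (simp only: others)
    also have "\<dots> \<le> real N * (real N - x i)"
      using \<open>0 \<le> real N - x i\<close> by (simp add: power2_eq_square mult_right_mono x_def)
    finally show ?thesis
      using False by (simp add: field_simps)
  qed
  have "(\<Sum>i=1..N. ff2 (x i) * (x i + (1 / real N) * (\<Sum>j\<in>{1..N} - {i}. x j ^ 2)))
      \<le> (\<Sum>i=1..N. ff2 (x i) * real N)"
    by (intro sum_mono mult_left_mono others_le) (simp_all add: x_def ff2_of_nat_nonneg)
  also have "\<dots> = real N * (\<Sum>i=1..N. ff2 (x i))"
    by (simp add: sum_distrib_left mult.commute)
  finally have "DN N nu r \<le> (real N * (\<Sum>i=1..N. ff2 (x i))) / (real N * ff2 (real N))"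
    unfolding DN_def x_def by (intro divide_right_mono) (simp_all add: ff2_of_nat_nonneg)
  also have "\<dots> = cN N nu r"
    using False by (simp add: cN_def x_def)
  finally show ?thesis .
qed (simp add: DN_def cN_def)

lemma sum_cN_upto_tauN_le:
  assumes "\<And>r. r \<ge> 1 \<Longrightarrow> (\<Sum>i=1..N. nu r i) = N" and "t \<ge> 0"
  shows "(\<Sum>r=1..tauN N nu t. cN N nu r) \<le> t + 1"
proof (cases "tauN N nu t")
  case (Suc m)
  have "\<not> t \<le> (\<Sum>r=1..m. cN N nu r)"
    using Suc unfolding tauN_def by (intro not_less_Least) simp
  moreover have "cN N nu (Suc m) \<le> 1"
    using assms(1) by (intro cN_le_1) simp
  ultimately show ?thesis
    using Suc by simp
qed (use assms(2) in simp)

theorem lemma6: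
  fixes N :: nat and nu :: "nat \<Rightarrow> nat \<Rightarrow> nat" and t B :: real and l :: nat
  assumes "N \<ge> 2"
    and "\<And>r. r \<ge> 1 \<Longrightarrow> (\<Sum>i=1..N. nu r i) = N"
    and "\<And>u. u \<ge> 0 \<Longrightarrow> \<exists>s. (\<Sum>r=1..s. cN N nu r) \<ge> u"
    and "t > 0" and "l \<ge> 1" and "B > 0"
  shows "(\<Sum>s\<in>distinct_tuples l (tauN N nu t). \<Prod>j<l. cN N nu (s j) - B * DN N nu (s j))
     \<ge> (\<Sum>s\<in>distinct_tuples l (tauN N nu t). \<Prod>j<l. cN N nu (s j))
       - (\<Sum>s=1..tauN N nu t. DN N nu s) * (t + 1) ^ (l - 1) * (1 + B) ^ l"
proof (rule sum_prod_perturbed_ge)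
  show "distinct_tuples l (tauN N nu t) \<subseteq> PiE {..<l} (\<lambda>_. {1..tauN N nu t})"
    unfolding distinct_tuples_def by (auto simp: atLeast0LessThan)
  show "(\<Sum>r=1..tauN N nu t. cN N nu r) \<le> t + 1"
    using assms(2,4) by (intro sum_cN_upto_tauN_le) auto
  show "DN N nu r \<le> cN N nu r" if "r \<in> {1..tauN N nu t}" for r
    using that assms(2) by (intro DN_le_cN) auto
qed (use assms(6) in \<open>simp_all add: cN_nonneg DN_nonneg\<close>)

end
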